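(* Let $\gamma$ be a consistent family of grafts for a tree $\mathcal T$. Then the hybrid $\mathrm{hybr}(\mathcal T,\gamma)$ is a tree.
   Context: A tree is a pair $\mathcal T=(Q,<_{\mathcal T})$ with $<_{\mathcal T}$ irreflexive transitive such that each set $\{v:v<_{\mathcal T}x\}$ is well-ordered; nodes are elements of $Q$; $x\parallel_{\mathcal T}y$ means $x,y$ incomparable; $\max\mathcal T$ = set of maximal nodes; $0_{\mathcal T}$ = least node (if it exists); for a set $A$ of nodes $A{\downarrow}_{\mathcal T}=\{v:\exists a\in A\ a\le_{\mathcal T}v\}$; if $A$ is an antichain and $x\in A{\downarrow}_{\mathcal T}$, $\mathrm{root}_{\mathcal T}(x,A)$ is the unique $r\in A$ with $r\le_{\mathcal T}x$. A graft for $\mathcal T$ is a tree $\mathcal G$ with more than one node, with a least node $0_{\mathcal G}\in\mathrm{nodes}\,\mathcal T$, such that $\max\mathcal G\subseteq\{v\in\mathrm{nodes}\,\mathcal T: v>_{\mathcal T}0_{\mathcal G}\}$, $\max\mathcal G$ is an antichain in $\mathcal T$, and the implant $\mathrm{impl}\,\mathcal G:=\mathrm{nodes}\,\mathcal G\setminus(\{0_{\mathcal G}\}\cup\max\mathcal G)$ is disjoint from $\mathrm{nodes}\,\mathcal T$. The explant is $\mathrm{expl}(\mathcal T,\mathcal G)=\{v:v>_{\mathcal T}0_{\mathcal G}\}\setminus(\max\mathcal G){\downarrow}_{\mathcal T}$. A family $\gamma$ is a consistent family of grafts for $\mathcal T$ if each member is a graft for $\mathcal T$, distinct members have disjoint implants,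 and for distinct $\mathcal D,\mathcal E\in\gamma$: $0_{\mathcal D}\parallel_{\mathcal T}0_{\mathcal E}$, or $0_{\mathcal D}\in(\max\mathcal E){\downarrow}_{\mathcal T}$, or $0_{\mathcal E}\in(\max\mathcal D){\downarrow}_{\mathcal T}$. The support is $\mathrm{supp}(\mathcal T,\gamma)=\mathrm{nodes}\,\mathcal T\setminus\bigcup_{\mathcal G\in\gamma}\mathrm{expl}(\mathcal T,\mathcal G)$. The hybrid $\mathrm{hybr}(\mathcal T,\gamma)=(H,<)$ has $H=\mathrm{supp}(\mathcal T,\gamma)\cup\bigcup_{\mathcal G\in\gamma}\mathrm{impl}\,\mathcal G$ and $x<y$ iff one of: (b1) $x,y\in\mathrm{supp}$ and $x<_{\mathcal T}y$; (b2) for some $\mathcal G\in\gamma$, $x,y\in\mathrm{impl}\,\mathcal G$ and $x<_{\mathcal G}y$; (b3) for some $\mathcal G\in\gamma$, $x\in\mathrm{supp}$, $y\in\mathrm{impl}\,\mathcal G$, $x\le_{\mathcal T}0_{\mathcal G}$; (b4) for some $\mathcal G\in\gamma$, $x\in\mathrm{impl}\,\mathcal G$, $y\in\mathrm{supp}\cap(\max\mathcal G){\downarrow}_{\mathcal T}$, and $x<_{\mathcal G}\mathrm{root}_{\mathcal T}(y,\max\mathcal G)$; (b5) for some distinct $\mathcal D,\mathcal E\in\gamma$, $x\in\mathrm{impl}\,\mathcal D$, $y\in\mathrm{impl}\,\mathcal E$, $0_{\mathcal E}\in(\max\mathcal D){\downarrow}_{\mathcal T}$, and $x<_{\mathcal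 D}\mathrm{root}_{\mathcal T}(0_{\mathcal E},\max\mathcal D)$. *)

theory Defs
  imports Main
begin

type_synonym 'a tree = "'a set \<times> ('a \<Rightarrow> 'a \<Rightarrow> bool)"

definition nodes :: "'a tree \<Rightarrow> 'a set" where "nodes T = fst T"
definition tless :: "'a tree \<Rightarrow> 'a \<Rightarrow> 'a \<Rightarrow> bool" where "tless T = snd T"
definition tle :: "'a tree \<Rightarrow> 'a \<Rightarrow> 'a \<Rightarrow> bool" where
  "tle T x y \<longleftrightarrow> x = y \<or> tless T x y"

definition well_ordered_by :: "('a \<Rightarrow> 'a \<Rightarrow> bool) \<Rightarrow> 'a set \<Rightarrow> bool" where
  "well_ordered_by lt P \<longleftrightarrow>
     (\<forall>x\<in>P. \<forall>y\<in>P. x = y \<or> lt x y \<or> lt y x) \<and>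
     (\<forall>S. S \<subseteq> P \<longrightarrow> S \<noteq> {} \<longrightarrow> (\<exists>m\<in>S. \<forall>s\<in>S. \<not> lt s m))"

definition is_tree :: "'a tree \<Rightarrow> bool" where
  "is_tree T \<longleftrightarrow>
     (\<forall>x y. tless T x y \<longrightarrow> x \<in> nodes T \<and> y \<in> nodes T) \<and>
     (\<forall>x. \<not> tless T x x) \<and>
     (\<forall>x y z. tless T x y \<longrightarrow> tless T y z \<longrightarrow> tless T x z) \<and>
     (\<forall>x\<in>nodes T. well_ordered_by (tless T) {v. tless T v x})"

definition incomp :: "'a tree \<Rightarrow> 'a \<Rightarrow> 'a \<Rightarrow> bool" where
  "incomp T x y \<longleftrightarrow> \<not> tle T x y \<and> \<not> tle T y x"

definition maxs :: "'a tree \<Rightarrow> 'a set" where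
  "maxs T = {x \<in> nodes T. \<not> (\<exists>y\<in>nodes T. tless T x y)}"

definition has_least :: "'a tree \<Rightarrow> bool" where
  "has_least T \<longleftrightarrow> (\<exists>z\<in>nodes T. \<forall>v\<in>nodes T. tle T z v)"

definition zero :: "'a tree \<Rightarrow> 'a" where
  "zero T = (THE z. z \<in> nodes T \<and> (\<forall>v\<in>nodes T. tle T z v))"

definition antichain :: "'a tree \<Rightarrow> 'a set \<Rightarrow> bool" where
  "antichain T A \<longleftrightarrow> A \<subseteq> nodes T \<and> (\<forall>a\<in>A. \<forall>b\<in>A. a \<noteq> b \<longrightarrow> incomp T a b)"

definition upcl :: "'a tree \<Rightarrow> 'a set \<Rightarrow> 'a set" where
  "upcl T A = {v \<in> nodes T. \<exists>a\<in>A. tle T a v}"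

definition root :: "'a tree \<Rightarrow> 'a \<Rightarrow> 'a set \<Rightarrow> 'a" where
  "root T x A = (THE r. r \<in> A \<and> tle T r x)"

definition impl :: "'a tree \<Rightarrow> 'a set" where
  "impl G = nodes G - ({zero G} \<union> maxs G)"

definition is_graft :: "'a tree \<Rightarrow> 'a tree \<Rightarrow> bool" where
  "is_graft T G \<longleftrightarrow>
     is_tree G \<and>
     (\<exists>x\<in>nodes G. \<exists>y\<in>nodes G. x \<noteq> y) \<and>
     has_least G \<and>
     zero G \<in> nodes T \<and>
     maxs G \<subseteq> {v \<in> nodes T. tless T (zero G) v} \<and>
     antichain T (maxs G) \<and>
     impl G \<inter> nodes T = {}"

definition expl :: "'a tree \<Rightarrow> 'a tree \<Rightarrow> 'a set" where
  "expl T G = {v. tless T (zero G) v} - upcl T (maxs G)"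

definition consistent_grafts :: "'a tree \<Rightarrow> 'a tree set \<Rightarrow> bool" where
  "consistent_grafts T \<gamma> \<longleftrightarrow>
     (\<forall>G\<in>\<gamma>. is_graft T G) \<and>
     (\<forall>D\<in>\<gamma>. \<forall>E\<in>\<gamma>. D \<noteq> E \<longrightarrow> impl D \<inter> impl E = {}) \<and>
     (\<forall>D\<in>\<gamma>. \<forall>E\<in>\<gamma>. D \<noteq> E \<longrightarrow>
        incomp T (zero D) (zero E) \<or> zero D \<in> upcl T (maxs E) \<or> zero E \<in> upcl T (maxs D))"

definition supp :: "'a tree \<Rightarrow> 'a tree set \<Rightarrow> 'a set" where
  "supp T \<gamma> = nodes T - (\<Union>G\<in>\<gamma>. expl T G)"

definition hybr :: "'a tree \<Rightarrow> 'a tree set \<Rightarrow> 'a tree" where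
  "hybr T \<gamma> =
    (supp T \<gamma> \<union> (\<Union>G\<in>\<gamma>. impl G),
     \<lambda>x y.
       (x \<in> supp T \<gamma> \<and> y \<in> supp T \<gamma> \<and> tless T x y) \<or>
       (\<exists>G\<in>\<gamma>. x \<in> impl G \<and> y \<in> impl G \<and> tless G x y) \<or>
       (\<exists>G\<in>\<gamma>. x \<in> supp T \<gamma> \<and> y \<in> impl G \<and> tle T x (zero G)) \<or>
       (\<exists>G\<in>\<gamma>. x \<in> impl G \<and> y \<in> supp T \<gamma> \<inter> upcl T (maxs G) \<and>
           tless G x (root T y (maxs G))) \<or>
       (\<exists>D\<in>\<gamma>. \<exists>E\<in>\<gamma>. D \<noteq> E \<and> x \<in> impl D \<and> y \<in> impl E \<and>
           zero E \<in> upcl T (maxs D) \<and> tless D x (root T (zero E) (maxs D))))"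

end

theory Submission
  imports Defs
begin

text \<open>
  The geometric input is that
  a support node comparable with a maximal node r of a graft G lies either below the base
  0_G or above r (otherwise it would belong to the explant of G), and that consistency
  forces the bases of two distinct grafts whose maximal nodes meet to be separated by one
  of these maximal nodes. Well-foundedness comes from projecting every hybrid node to the
  tree: a support node to itself, an implant node of G to 0_G. This projection is
  monotone, so if a set has T-minimal projection a, then either a itself is a minimal
  element of the set, or a = 0_G and a G-minimal element among the implant nodes of G
  in the set is minimal.
\<close>

lemma tree_less_nodes: "is_tree T \<Longrightarrow> tless T x y \<Longrightarrow> x \<in> nodes T \<and> y \<in> nodes T"
  by (simp add: is_tree_def)

lemma tree_less_irrefl: "is_tree T \<Longrightarrow> \<not> tless T x x"
  by (simp add: is_tree_def)

lemma tree_less_trans: "is_tree T \<Longrightarrow> tless T x y \<Longrightarrow> tless T y z \<Longrightarrow> tless T x z"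
  unfolding is_tree_def by blast

lemma tree_le_less_trans: "is_tree T \<Longrightarrow> tle T x y \<Longrightarrow> tless T y z \<Longrightarrow> tless T x z"
  using tree_less_trans[of T x y z] unfolding tle_def by blast

lemma tree_less_le_trans: "is_tree T \<Longrightarrow> tless T x y \<Longrightarrow> tle T y z \<Longrightarrow> tless T x z"
  using tree_less_trans[of T x y z] unfolding tle_def by blast

lemma tree_le_trans: "is_tree T \<Longrightarrow> tle T x y \<Longrightarrow> tle T y z \<Longrightarrow> tle T x z"
  using tree_less_trans[of T x y z] unfolding tle_def by blast

lemma tree_less_linear_below:
  assumes "is_tree T" "tless T a x" "tless T b x"
  shows "a = b \<or> tless T a b \<or> tless T b a"
proof -
  have "well_ordered_by (tless T) {v. tless T v x}"
    using assms tree_less_nodes unfolding is_tree_def by blast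
  then show ?thesis
    using assms(2,3) unfolding well_ordered_by_def by blast
qed

lemma tree_le_linear_below:
  assumes "is_tree T" "tle T a x" "tle T b x"
  shows "tle T a b \<or> tle T b a"
  using assms tree_less_linear_below[OF assms(1), of a x b] unfolding tle_def by blast

lemma tree_has_minimal:
  assumes "is_tree T" "x \<in> Q"
  shows "\<exists>m\<in>Q. \<forall>s\<in>Q. \<not> tless T s m"
proof (cases "\<exists>s\<in>Q. tless T s x")
  case False
  then show ?thesis using assms(2) by blast
next
  case True
  then obtain s where "tless T s x" by blast
  then have "x \<in> nodes T" using tree_less_nodes[OF assms(1)] by blast
  then have "well_ordered_by (tless T) {v. tless T v x}" using assms(1) by (simp add: is_tree_def)
  moreover have "{v\<in>Q. tless T v x} \<noteq> {}" using True by blast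
  ultimately obtain m where m: "m \<in> Q" "tless T m x" and m_min: "\<forall>s\<in>Q. tless T s x \<longrightarrow> \<not> tless T s m"
    unfolding well_ordered_by_def by (metis (no_types, lifting) mem_Collect_eq subsetI)
  have "\<not> tless T s m" if "s \<in> Q" for s
    using m_min that tree_less_trans[OF assms(1) _ m(2)] by blast
  then show ?thesis using m(1) by blast
qed

lemma is_treeI:
  assumes "\<And>x y. tless T x y \<Longrightarrow> x \<in> nodes T \<and> y \<in> nodes T"
    and "\<And>x. \<not> tless T x x"
    and "\<And>x y z. tless T x y \<Longrightarrow> tless T y z \<Longrightarrow> tless T x z"
    and "\<And>x y z. tless T x z \<Longrightarrow> tless T y z \<Longrightarrow> x = y \<or> tless T x y \<or> tless T y x"
    and "\<And>Q q. Q \<subseteq> nodes T \<Longrightarrow> q \<in> Q \<Longrightarrow> \<exists>m\<in>Q. \<forall>s\<in>Q. \<not> tless T s m"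
  shows "is_tree T"
proof -
  have "well_ordered_by (tless T) {v. tless T v x}" for x
    unfolding well_ordered_by_def
  proof (intro conjI allI impI ballI)
    fix Q assume "Q \<subseteq> {v. tless T v x}" "Q \<noteq> {}"
    then show "\<exists>m\<in>Q. \<forall>s\<in>Q. \<not> tless T s m" using assms(1,5) by (metis equals0I subset_iff)
  qed (use assms(4) in blast)
  then show ?thesis unfolding is_tree_def using assms(1-3) by blast
qed

locale graft_family =
  fixes T :: "'a tree" and \<gamma> :: "'a tree set"
  assumes tree: "is_tree T" and consistent: "consistent_grafts T \<gamma>"
begin

abbreviation S :: "'a set" where "S \<equiv> supp T \<gamma>"
abbreviation hless :: "'a \<Rightarrow> 'a \<Rightarrow> bool" where "hless \<equiv> tless (hybr T \<gamma>)"

lemma graft: "G \<in> \<gamma> \<Longrightarrow> is_graft T G"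
  using consistent unfolding consistent_grafts_def by blast

lemma graft_tree: "G \<in> \<gamma> \<Longrightarrow> is_tree G"
  using graft unfolding is_graft_def by blast

lemma zero_in_nodes: "G \<in> \<gamma> \<Longrightarrow> zero G \<in> nodes T"
  using graft unfolding is_graft_def by blast

lemma zero_less_max: "G \<in> \<gamma> \<Longrightarrow> m \<in> maxs G \<Longrightarrow> m \<in> nodes T \<and> tless T (zero G) m"
  using graft unfolding is_graft_def by blast

lemma maxs_antichain: "G \<in> \<gamma> \<Longrightarrow> m \<in> maxs G \<Longrightarrow> m' \<in> maxs G \<Longrightarrow> tle T m m' \<Longrightarrow> m = m'"
  using graft unfolding is_graft_def antichain_def incomp_def by blast

lemma impl_disjoint: "G \<in> \<gamma> \<Longrightarrow> G' \<in> \<gamma> \<Longrightarrow> u \<in> impl G \<Longrightarrow> u \<in> impl G' \<Longrightarrow> G = G'"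
  using consistent unfolding consistent_grafts_def by blast

lemma supp_in_nodes: "x \<in> S \<Longrightarrow> x \<in> nodes T"
  by (simp add: supp_def)

lemma supp_notin_impl: "x \<in> S \<Longrightarrow> G \<in> \<gamma> \<Longrightarrow> x \<notin> impl G"
  using supp_in_nodes graft unfolding is_graft_def by blast

lemma root_eqI:
  assumes "G \<in> \<gamma>" "m \<in> maxs G" "tle T m y"
  shows "root T y (maxs G) = m"
  unfolding root_def
proof (rule the_equality)
  fix r assume "r \<in> maxs G \<and> tle T r y"
  then show "r = m" using assms tree_le_linear_below[OF tree] maxs_antichain by metis
qed (use assms in blast)

lemma root_in_maxs:
  assumes "G \<in> \<gamma>" "y \<in> upcl T (maxs G)"
  shows "root T y (maxs G) \<in> maxs G \<and> tle T (root T y (maxs G)) y"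
  using assms root_eqI unfolding upcl_def by fastforce

lemma zero_less_upcl: "G \<in> \<gamma> \<Longrightarrow> y \<in> upcl T (maxs G) \<Longrightarrow> tless T (zero G) y"
  using root_in_maxs zero_less_max tree_less_le_trans[OF tree] by metis

lemma root_upward:
  assumes "G \<in> \<gamma>" "y \<in> upcl T (maxs G)" "tle T y z" "z \<in> nodes T"
  shows "z \<in> upcl T (maxs G) \<and> root T z (maxs G) = root T y (maxs G)"
proof -
  have r: "root T y (maxs G) \<in> maxs G" "tle T (root T y (maxs G)) y"
    using root_in_maxs assms by auto
  then have "tle T (root T y (maxs G)) z" using tree_le_trans[OF tree] assms(3) by blast
  then show ?thesis using r root_eqI[OF assms(1) r(1)] assms(4) unfolding upcl_def by blast
qed

lemma supp_below_zero_or_above_max: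
  assumes "G \<in> \<gamma>" "x \<in> S" "r \<in> maxs G" "tle T x w" "tle T r w"
  shows "tle T x (zero G) \<or> tle T r x"
proof (rule ccontr)
  assume neither: "\<not> (tle T x (zero G) \<or> tle T r x)"
  then have x_r: "tless T x r" using tree_le_linear_below[OF tree assms(4,5)] unfolding tle_def by blast
  then have "tless T (zero G) x"
    using tree_less_linear_below[OF tree _ zero_less_max[OF assms(1,3), THEN conjunct2]] neither
    unfolding tle_def by blast
  moreover have "x \<notin> upcl T (maxs G)"
  proof
    assume "x \<in> upcl T (maxs G)"
    then obtain m where m: "m \<in> maxs G" "tle T m x" unfolding upcl_def by blast
    then have "tle T m r" using x_r tree_le_less_trans[OF tree] unfolding tle_def by blast
    then have "m = r" using maxs_antichain assms(1,3) m(1) by blast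
    then show False using m x_r tree_le_less_trans[OF tree] tree_less_irrefl[OF tree] by metis
  qed
  ultimately have "x \<in> expl T G" unfolding expl_def by blast
  then show False using assms(1,2) unfolding supp_def by blast
qed

lemma distinct_grafts_separated:
  assumes "D \<in> \<gamma>" "E \<in> \<gamma>" "D \<noteq> E" "r \<in> maxs D" "r' \<in> maxs E" "tle T r w" "tle T r' w"
  shows "tle T r' (zero D) \<or> tle T r (zero E)"
proof -
  have D_w: "tless T (zero D) w" and E_w: "tless T (zero E) w"
    using zero_less_max assms tree_less_le_trans[OF tree] by blast+
  have "incomp T (zero D) (zero E) \<or> zero D \<in> upcl T (maxs E) \<or> zero E \<in> upcl T (maxs D)"
    using consistent assms unfolding consistent_grafts_def by blast
  then show ?thesis
  proof (elim disjE)
    assume "incomp T (zero D) (zero E)"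
    then show ?thesis using tree_less_linear_below[OF tree D_w E_w] unfolding incomp_def tle_def by blast
  next
    assume "zero D \<in> upcl T (maxs E)"
    then obtain m where m: "m \<in> maxs E" "tle T m (zero D)" unfolding upcl_def by blast
    then have "m = r'" using root_eqI[OF assms(2)] assms(5,7) D_w tree_le_less_trans[OF tree]
      unfolding tle_def by metis
    then show ?thesis using m by blast
  next
    assume "zero E \<in> upcl T (maxs D)"
    then obtain m where m: "m \<in> maxs D" "tle T m (zero E)" unfolding upcl_def by blast
    then have "m = r" using root_eqI[OF assms(1)] assms(4,6) E_w tree_le_less_trans[OF tree]
      unfolding tle_def by metis
    then show ?thesis using m by blast
  qed
qed

definition hyb_SS :: "'a \<Rightarrow> 'a \<Rightarrow> bool" where
  "hyb_SS x y \<longleftrightarrow> x \<in> S \<and> y \<in> S \<and> tless T x y"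
definition hyb_II :: "'a tree \<Rightarrow> 'a \<Rightarrow> 'a \<Rightarrow> bool" where
  "hyb_II G x y \<longleftrightarrow> G \<in> \<gamma> \<and> x \<in> impl G \<and> y \<in> impl G \<and> tless G x y"
definition hyb_SI :: "'a tree \<Rightarrow> 'a \<Rightarrow> 'a \<Rightarrow> bool" where
  "hyb_SI G x y \<longleftrightarrow> G \<in> \<gamma> \<and> x \<in> S \<and> y \<in> impl G \<and> tle T x (zero G)"
definition hyb_IS :: "'a tree \<Rightarrow> 'a \<Rightarrow> 'a \<Rightarrow> bool" where
  "hyb_IS G x y \<longleftrightarrow> G \<in> \<gamma> \<and> x \<in> impl G \<and> y \<in> S \<and> y \<in> upcl T (maxs G) \<and>
  tless G x (root T y (maxs G))"
definition hyb_IJ :: "'a tree \<Rightarrow> 'a tree \<Rightarrow> 'a \<Rightarrow> 'a \<Rightarrow> bool" where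
  "hyb_IJ D E x y \<longleftrightarrow> D \<in> \<gamma> \<and> E \<in> \<gamma> \<and> D \<noteq> E \<and> x \<in> impl D \<and> y \<in> impl E \<and>
    zero E \<in> upcl T (maxs D) \<and> tless D x (root T (zero E) (maxs D))"

lemmas hyb_defs = hyb_SS_def hyb_II_def hyb_SI_def hyb_IS_def hyb_IJ_def

lemma hless_iff:
  "hless x y \<longleftrightarrow>
     hyb_SS x y \<or> (\<exists>G. hyb_II G x y) \<or> (\<exists>G. hyb_SI G x y) \<or> (\<exists>G. hyb_IS G x y) \<or>
     (\<exists>D E. hyb_IJ D E x y)"
  unfolding hyb_defs hybr_def by (subst tless_def, subst snd_conv) blast

lemma hybr_nodes: "nodes (hybr T \<gamma>) = S \<union> (\<Union>G\<in>\<gamma>. impl G)"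
  by (simp add: hybr_def nodes_def)

lemma hyb_target:
  "hyb_SS x y \<Longrightarrow> y \<in> S" "hyb_IS G x y \<Longrightarrow> y \<in> S"
  "hyb_II G x y \<Longrightarrow> y \<in> impl G \<and> G \<in> \<gamma>" "hyb_SI G x y \<Longrightarrow> y \<in> impl G \<and> G \<in> \<gamma>"
  "hyb_IJ D E x y \<Longrightarrow> y \<in> impl E \<and> E \<in> \<gamma>"
  unfolding hyb_defs by auto

lemma hyb_source:
  "hyb_SS x y \<Longrightarrow> x \<in> S" "hyb_SI G x y \<Longrightarrow> x \<in> S"
  "hyb_II G x y \<Longrightarrow> x \<in> impl G \<and> G \<in> \<gamma>" "hyb_IS G x y \<Longrightarrow> x \<in> impl G \<and> G \<in> \<gamma>"
  "hyb_IJ D E x y \<Longrightarrow> x \<in> impl D \<and> D \<in> \<gamma>"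
  unfolding hyb_defs by auto

lemma hless_nodes: "hless x y \<Longrightarrow> x \<in> nodes (hybr T \<gamma>) \<and> y \<in> nodes (hybr T \<gamma>)"
  unfolding hless_iff hybr_nodes hyb_defs by blast

lemma hless_irrefl: "\<not> hless x x"
  unfolding hless_iff hyb_defs
  using tree_less_irrefl[OF tree] tree_less_irrefl[OF graft_tree] supp_notin_impl impl_disjoint by blast

lemma hless_to_supp: "hless u z \<Longrightarrow> z \<in> S \<Longrightarrow> hyb_SS u z \<or> (\<exists>G. hyb_IS G u z)"
  unfolding hless_iff using hyb_target supp_notin_impl by blast

lemma hless_to_impl:
  assumes "hless u z" "z \<in> impl E" "E \<in> \<gamma>"
  shows "hyb_II E u z \<or> hyb_SI E u z \<or> (\<exists>D. hyb_IJ D E u z)"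
  using assms(1) unfolding hless_iff
proof (elim disjE exE)
  fix G assume "hyb_II G u z"
  then show ?thesis using assms(2,3) hyb_target(3) impl_disjoint by metis
next
  fix G assume "hyb_SI G u z"
  then show ?thesis using assms(2,3) hyb_target(4) impl_disjoint by metis
next
  fix D E' assume "hyb_IJ D E' u z"
  then show ?thesis using assms(2,3) hyb_target(5) impl_disjoint by metis
qed (use assms(2,3) hyb_target supp_notin_impl in blast)+

lemma hless_from_supp: "hless y z \<Longrightarrow> y \<in> S \<Longrightarrow> hyb_SS y z \<or> (\<exists>G. hyb_SI G y z)"
  unfolding hless_iff using hyb_source supp_notin_impl by blast

lemma hless_from_impl:
  assumes "hless y z" "y \<in> impl E" "E \<in> \<gamma>"
  shows "hyb_II E y z \<or> hyb_IS E y z \<or> (\<exists>F. hyb_IJ E F y z)"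
  using assms(1) unfolding hless_iff
proof (elim disjE exE)
  fix G assume "hyb_II G y z"
  then show ?thesis using assms(2,3) hyb_source(3) impl_disjoint by metis
next
  fix G assume "hyb_IS G y z"
  then show ?thesis using assms(2,3) hyb_source(4) impl_disjoint by metis
next
  fix D F assume "hyb_IJ D F y z"
  then show ?thesis using assms(2,3) hyb_source(5) impl_disjoint by metis
qed (use assms(2,3) hyb_source supp_notin_impl in blast)+

lemma trans_SS_SS: "hyb_SS x y \<Longrightarrow> hyb_SS y z \<Longrightarrow> hless x z"
  unfolding hless_iff hyb_SS_def using tree_less_trans[OF tree] by blast

lemma trans_SS_SI: "hyb_SS x y \<Longrightarrow> hyb_SI G y z \<Longrightarrow> hless x z"
  unfolding hless_iff hyb_SS_def hyb_SI_def using tree_le_less_trans[OF tree] unfolding tle_def by metis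

lemma trans_II_II: "hyb_II G x y \<Longrightarrow> hyb_II G' y z \<Longrightarrow> hless x z"
  unfolding hless_iff hyb_II_def using impl_disjoint tree_less_trans graft_tree by metis

lemma trans_II_IS: "hyb_II G x y \<Longrightarrow> hyb_IS G' y z \<Longrightarrow> hless x z"
  unfolding hless_iff hyb_II_def hyb_IS_def using impl_disjoint tree_less_trans graft_tree by metis

lemma trans_II_IJ: "hyb_II G x y \<Longrightarrow> hyb_IJ D E y z \<Longrightarrow> hless x z"
  unfolding hless_iff hyb_II_def hyb_IJ_def using impl_disjoint tree_less_trans graft_tree by metis

lemma trans_SI_II: "hyb_SI G x y \<Longrightarrow> hyb_II G' y z \<Longrightarrow> hless x z"
  unfolding hless_iff hyb_II_def hyb_SI_def using impl_disjoint by metis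

lemma trans_SI_IS:
  assumes "hyb_SI G x y" "hyb_IS G' y z"
  shows "hless x z"
proof -
  have "G' = G" using assms impl_disjoint unfolding hyb_SI_def hyb_IS_def by blast
  then have "tless T (zero G) z" using assms(2) zero_less_upcl unfolding hyb_IS_def by blast
  then have "tless T x z" using assms(1) tree_le_less_trans[OF tree] unfolding hyb_SI_def by blast
  then have "hyb_SS x z" using assms unfolding hyb_SS_def hyb_SI_def hyb_IS_def by blast
  then show ?thesis unfolding hless_iff by blast
qed

lemma trans_SI_IJ:
  assumes "hyb_SI G x y" "hyb_IJ D E y z"
  shows "hless x z"
proof -
  have "D = G" using assms impl_disjoint unfolding hyb_SI_def hyb_IJ_def by blast
  then have "tless T (zero G) (zero E)" using assms(2) zero_less_upcl unfolding hyb_IJ_def by blast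
  then have "tle T x (zero E)" using assms(1) tree_le_less_trans[OF tree] unfolding hyb_SI_def tle_def by blast
  then have "hyb_SI E x z" using assms unfolding hyb_SI_def hyb_IJ_def by blast
  then show ?thesis unfolding hless_iff by blast
qed

lemma trans_IS_SS:
  assumes "hyb_IS G x y" "hyb_SS y z"
  shows "hless x z"
proof -
  have "tle T y z" "z \<in> nodes T" "G \<in> \<gamma>" "y \<in> upcl T (maxs G)"
    using assms supp_in_nodes unfolding hyb_SS_def hyb_IS_def tle_def by auto
  then have "z \<in> upcl T (maxs G) \<and> root T z (maxs G) = root T y (maxs G)"
    using root_upward by blast
  then have "hyb_IS G x z" using assms unfolding hyb_IS_def hyb_SS_def by auto
  then show ?thesis unfolding hless_iff by blast
qed

lemma trans_IS_SI:
  assumes "hyb_IS G x y" "hyb_SI E y z"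
  shows "hless x z"
proof -
  have up: "zero E \<in> upcl T (maxs G) \<and> root T (zero E) (maxs G) = root T y (maxs G)"
    using root_upward assms zero_in_nodes unfolding hyb_IS_def hyb_SI_def by metis
  have "G \<noteq> E"
  proof
    assume "G = E"
    then show False
      using up zero_less_upcl tree_less_irrefl[OF tree] assms(2) unfolding hyb_SI_def by blast
  qed
  then have "hyb_IJ G E x z" using up assms unfolding hyb_IS_def hyb_SI_def hyb_IJ_def by auto
  then show ?thesis unfolding hless_iff by blast
qed

lemma trans_IJ_II: "hyb_IJ D E x y \<Longrightarrow> hyb_II G y z \<Longrightarrow> hless x z"
  unfolding hless_iff hyb_II_def hyb_IJ_def using impl_disjoint by metis

lemma trans_IJ_IS:
  assumes "hyb_IJ D E x y" "hyb_IS G y z"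
  shows "hless x z"
proof -
  have "G = E" using assms impl_disjoint unfolding hyb_IS_def hyb_IJ_def by blast
  then have "tle T (zero E) z"
    using zero_less_upcl assms unfolding hyb_IS_def tle_def by blast
  moreover have "D \<in> \<gamma>" "zero E \<in> upcl T (maxs D)" "z \<in> nodes T"
    using assms supp_in_nodes unfolding hyb_IJ_def hyb_IS_def by auto
  ultimately have "z \<in> upcl T (maxs D) \<and> root T z (maxs D) = root T (zero E) (maxs D)"
    using root_upward by blast
  then have "hyb_IS D x z" using assms unfolding hyb_IS_def hyb_IJ_def by auto
  then show ?thesis unfolding hless_iff by blast
qed

lemma trans_IJ_IJ:
  assumes "hyb_IJ D E x y" "hyb_IJ E' F y z"
  shows "hless x z"
proof -
  have "E' = E" using assms impl_disjoint unfolding hyb_IJ_def by blast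
  then have E_F: "tless T (zero E) (zero F)" using zero_less_upcl assms unfolding hyb_IJ_def by blast
  have D: "D \<in> \<gamma>" "zero E \<in> upcl T (maxs D)" "zero F \<in> nodes T"
    using assms zero_in_nodes unfolding hyb_IJ_def by auto
  then have up: "zero F \<in> upcl T (maxs D) \<and> root T (zero F) (maxs D) = root T (zero E) (maxs D)"
    using root_upward E_F unfolding tle_def by blast
  then have "D \<noteq> F" using zero_less_upcl[OF D(1)] tree_less_irrefl[OF tree] by blast
  then have "hyb_IJ D F x z" using up assms unfolding hyb_IJ_def by auto
  then show ?thesis unfolding hless_iff by blast
qed

lemma hless_trans:
  assumes "hless x y" "hless y z"
  shows "hless x z"
proof -
  have "y \<in> S \<or> (\<exists>E\<in>\<gamma>. y \<in> impl E)" using assms(1) hless_nodes hybr_nodes by blast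
  then show ?thesis
  proof (elim disjE bexE)
    assume "y \<in> S"
    then have "hyb_SS x y \<or> (\<exists>G. hyb_IS G x y)" "hyb_SS y z \<or> (\<exists>G. hyb_SI G y z)"
      using assms hless_to_supp hless_from_supp by blast+
    then show ?thesis using trans_SS_SS trans_SS_SI trans_IS_SS trans_IS_SI by blast
  next
    fix E assume "E \<in> \<gamma>" "y \<in> impl E"
    then have x_y: "hyb_II E x y \<or> hyb_SI E x y \<or> (\<exists>D. hyb_IJ D E x y)"
      and y_z: "hyb_II E y z \<or> hyb_IS E y z \<or> (\<exists>F. hyb_IJ E F y z)"
      using assms hless_to_impl hless_from_impl by blast+
    from x_y show ?thesis
    proof (elim disjE exE)
      assume "hyb_II E x y"
      then show ?thesis using y_z trans_II_II trans_II_IS trans_II_IJ by blast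
    next
      assume "hyb_SI E x y"
      then show ?thesis using y_z trans_SI_II trans_SI_IS trans_SI_IJ by blast
    next
      fix D assume "hyb_IJ D E x y"
      then show ?thesis using y_z trans_IJ_II trans_IJ_IS trans_IJ_IJ by blast
    qed
  qed
qed

lemma supp_impl_comparable:
  assumes "x \<in> S" "G \<in> \<gamma>" "y \<in> impl G" "r \<in> maxs G" "tless G y r" "tle T x w" "tle T r w"
  shows "hless x y \<or> hless y x"
  using supp_below_zero_or_above_max[OF assms(2,1,4,6,7)]
proof
  assume "tle T x (zero G)"
  then have "hyb_SI G x y" using assms unfolding hyb_SI_def by blast
  then show ?thesis unfolding hless_iff by blast
next
  assume "tle T r x"
  then have "x \<in> upcl T (maxs G)" "root T x (maxs G) = r"
    using assms supp_in_nodes root_eqI unfolding upcl_def by auto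
  then have "hyb_IS G y x" using assms unfolding hyb_IS_def by auto
  then show ?thesis unfolding hless_iff by blast
qed

lemma impl_impl_comparable:
  assumes "D \<in> \<gamma>" "E \<in> \<gamma>" "D \<noteq> E" "x \<in> impl D" "y \<in> impl E" "r \<in> maxs D" "r' \<in> maxs E"
    "tless D x r" "tless E y r'" "tle T r w" "tle T r' w"
  shows "hless x y \<or> hless y x"
  using distinct_grafts_separated[OF assms(1-3,6,7,10,11)]
proof
  assume "tle T r' (zero D)"
  then have "zero D \<in> upcl T (maxs E)" "root T (zero D) (maxs E) = r'"
    using assms zero_in_nodes root_eqI unfolding upcl_def by auto
  then have "hyb_IJ E D y x" using assms unfolding hyb_IJ_def by auto
  then show ?thesis unfolding hless_iff by blast
next
  assume "tle T r (zero E)"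
  then have "zero E \<in> upcl T (maxs D)" "root T (zero E) (maxs D) = r"
    using assms zero_in_nodes root_eqI unfolding upcl_def by auto
  then have "hyb_IJ D E x y" using assms unfolding hyb_IJ_def by auto
  then show ?thesis unfolding hless_iff by blast
qed

lemma same_graft_comparable:
  "G \<in> \<gamma> \<Longrightarrow> x \<in> impl G \<Longrightarrow> y \<in> impl G \<Longrightarrow> tless G x r \<Longrightarrow> tless G y r \<Longrightarrow>
    x = y \<or> hless x y \<or> hless y x"
  unfolding hless_iff hyb_II_def using tree_less_linear_below[OF graft_tree] by blast

lemma linear_SS_SS: "hyb_SS x z \<Longrightarrow> hyb_SS y z \<Longrightarrow> x = y \<or> hless x y \<or> hless y x"
  unfolding hless_iff hyb_SS_def using tree_less_linear_below[OF tree] by blast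

lemma linear_SS_IS:
  assumes "hyb_SS x z" "hyb_IS G y z"
  shows "hless x y \<or> hless y x"
proof -
  have G: "G \<in> \<gamma>" "y \<in> impl G" "tless G y (root T z (maxs G))"
    and r: "root T z (maxs G) \<in> maxs G" "tle T (root T z (maxs G)) z"
    using assms root_in_maxs unfolding hyb_IS_def by auto
  show ?thesis
    using supp_impl_comparable[OF _ G(1,2) r(1) G(3) _ r(2)] assms unfolding hyb_SS_def tle_def by blast
qed

lemma linear_IS_IS:
  assumes "hyb_IS G x z" "hyb_IS G' y z"
  shows "x = y \<or> hless x y \<or> hless y x"
proof (cases "G = G'")
  case True
  then show ?thesis using assms same_graft_comparable unfolding hyb_IS_def by blast
next
  case False
  have G: "G \<in> \<gamma>" "x \<in> impl G" "tless G x (root T z (maxs G))"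
    and r: "root T z (maxs G) \<in> maxs G" "tle T (root T z (maxs G)) z"
    and G': "G' \<in> \<gamma>" "y \<in> impl G'" "tless G' y (root T z (maxs G'))"
    and r': "root T z (maxs G') \<in> maxs G'" "tle T (root T z (maxs G')) z"
    using assms root_in_maxs unfolding hyb_IS_def by auto
  show ?thesis using impl_impl_comparable[OF G(1) G'(1) False G(2) G'(2) r(1) r'(1) G(3) G'(3) r(2) r'(2)]
    by blast
qed

lemma linear_II_II: "hyb_II G x z \<Longrightarrow> hyb_II G' y z \<Longrightarrow> x = y \<or> hless x y \<or> hless y x"
  unfolding hyb_II_def using impl_disjoint same_graft_comparable by metis

lemma linear_II_SI: "hyb_II G x z \<Longrightarrow> hyb_SI G' y z \<Longrightarrow> hless y x"
  unfolding hless_iff hyb_II_def hyb_SI_def using impl_disjoint by metis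

lemma linear_II_IJ: "hyb_II G x z \<Longrightarrow> hyb_IJ D G' y z \<Longrightarrow> hless y x"
  unfolding hless_iff hyb_II_def hyb_IJ_def using impl_disjoint by metis

lemma linear_SI_SI: "hyb_SI G x z \<Longrightarrow> hyb_SI G' y z \<Longrightarrow> x = y \<or> hless x y \<or> hless y x"
  unfolding hless_iff hyb_SI_def hyb_SS_def
  using impl_disjoint tree_le_linear_below[OF tree] unfolding tle_def by metis

lemma linear_SI_IJ:
  assumes "hyb_SI E x z" "hyb_IJ D E' y z"
  shows "hless x y \<or> hless y x"
proof -
  have D: "D \<in> \<gamma>" "y \<in> impl D" "tless D y (root T (zero E') (maxs D))"
    and r: "root T (zero E') (maxs D) \<in> maxs D" "tle T (root T (zero E') (maxs D)) (zero E')"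
    using assms root_in_maxs unfolding hyb_IJ_def by auto
  moreover have "E' = E" using assms impl_disjoint unfolding hyb_SI_def hyb_IJ_def by blast
  ultimately show ?thesis
    using supp_impl_comparable[OF _ D(1,2) r(1) D(3) _ r(2)] assms unfolding hyb_SI_def by blast
qed

lemma linear_IJ_IJ:
  assumes "hyb_IJ D E x z" "hyb_IJ D' E' y z"
  shows "x = y \<or> hless x y \<or> hless y x"
proof (cases "D = D'")
  case True
  moreover have "E' = E" using assms impl_disjoint unfolding hyb_IJ_def by blast
  ultimately show ?thesis using assms same_graft_comparable unfolding hyb_IJ_def by blast
next
  case False
  have "E' = E" using assms impl_disjoint unfolding hyb_IJ_def by blast
  have D: "D \<in> \<gamma>" "x \<in> impl D" "tless D x (root T (zero E) (maxs D))"
    and r: "root T (zero E) (maxs D) \<in> maxs D" "tle T (root T (zero E) (maxs D)) (zero E)"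
    and D': "D' \<in> \<gamma>" "y \<in> impl D'" "tless D' y (root T (zero E) (maxs D'))"
    and r': "root T (zero E) (maxs D') \<in> maxs D'" "tle T (root T (zero E) (maxs D')) (zero E)"
    using assms \<open>E' = E\<close> root_in_maxs unfolding hyb_IJ_def by auto
  show ?thesis using impl_impl_comparable[OF D(1) D'(1) False D(2) D'(2) r(1) r'(1) D(3) D'(3) r(2) r'(2)]
    by blast
qed

lemma hless_linear_below:
  assumes "hless x z" "hless y z"
  shows "x = y \<or> hless x y \<or> hless y x"
proof -
  have "z \<in> S \<or> (\<exists>E\<in>\<gamma>. z \<in> impl E)" using assms(1) hless_nodes hybr_nodes by blast
  then show ?thesis
  proof (elim disjE bexE)
    assume "z \<in> S"
    then have "hyb_SS x z \<or> (\<exists>G. hyb_IS G x z)" "hyb_SS y z \<or> (\<exists>G. hyb_IS G y z)"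
      using assms hless_to_supp by blast+
    then show ?thesis using linear_SS_SS linear_SS_IS linear_IS_IS by blast
  next
    fix E assume "E \<in> \<gamma>" "z \<in> impl E"
    then have x_kind: "hyb_II E x z \<or> hyb_SI E x z \<or> (\<exists>D. hyb_IJ D E x z)"
      and y_kind: "hyb_II E y z \<or> hyb_SI E y z \<or> (\<exists>D. hyb_IJ D E y z)"
      using assms hless_to_impl by blast+
    from x_kind show ?thesis
    proof (elim disjE exE)
      assume "hyb_II E x z"
      then show ?thesis using y_kind linear_II_II linear_II_SI linear_II_IJ by blast
    next
      assume "hyb_SI E x z"
      then show ?thesis using y_kind linear_II_SI linear_SI_SI linear_SI_IJ by blast
    next
      fix D assume "hyb_IJ D E x z"
      then show ?thesis using y_kind linear_II_IJ linear_SI_IJ linear_IJ_IJ by blast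
    qed
  qed
qed

lemma hless_has_minimal:
  assumes "Q \<subseteq> nodes (hybr T \<gamma>)" "q \<in> Q"
  shows "\<exists>m\<in>Q. \<forall>s\<in>Q. \<not> hless s m"
proof -
  define A where "A = (Q \<inter> S) \<union> {zero G |G. G \<in> \<gamma> \<and> Q \<inter> impl G \<noteq> {}}"
  have supp_in_A: "s \<in> A" if "s \<in> Q" "s \<in> S" for s
    using that unfolding A_def by blast
  have zero_in_A: "zero G \<in> A" if "s \<in> Q" "G \<in> \<gamma>" "s \<in> impl G" for s G
    using that unfolding A_def by blast
  have "q \<in> S \<or> (\<exists>G\<in>\<gamma>. q \<in> impl G)" using assms hybr_nodes by auto
  then have "A \<noteq> {}" using assms(2) supp_in_A zero_in_A by blast
  then obtain a where a: "a \<in> A" and a_min: "\<forall>s\<in>A. \<not> tless T s a"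
    using tree_has_minimal[OF tree] by blast
  show ?thesis
  proof (cases "a \<in> Q \<inter> S")
    case True
    have "\<not> hless s a" if "s \<in> Q" for s
    proof
      assume "hless s a"
      then consider "hyb_SS s a" | G where "hyb_IS G s a" using True hless_to_supp by blast
      then show False
      proof cases
        case 1
        then show False using a_min supp_in_A that unfolding hyb_SS_def by blast
      next
        case (2 G)
        then have "zero G \<in> A" "tless T (zero G) a"
          using zero_in_A that zero_less_upcl unfolding hyb_IS_def by blast+
        then show False using a_min by blast
      qed
    qed
    then show ?thesis using True by blast
  next
    case False
    then obtain G where G: "G \<in> \<gamma>" "a = zero G" "Q \<inter> impl G \<noteq> {}" using a unfolding A_def by blast
    then obtain m where m: "m \<in> Q \<inter> impl G" and m_min: "\<forall>s\<in>Q \<inter> impl G. \<not> tless G s m"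
      using tree_has_minimal[OF graft_tree[OF G(1)]] by (metis all_not_in_conv)
    have "\<not> hless s m" if "s \<in> Q" for s
    proof
      assume "hless s m"
      then consider "hyb_II G s m" | "hyb_SI G s m" | D where "hyb_IJ D G s m"
        using m G(1) hless_to_impl by blast
      then show False
      proof cases
        case 1
        then show False using m_min that unfolding hyb_II_def by blast
      next
        case 2
        then have "s \<in> A" "s \<noteq> a" "tle T s a"
          using supp_in_A that False G(2) unfolding hyb_SI_def by blast+
        then show False using a_min unfolding tle_def by blast
      next
        case (3 D)
        then have "zero D \<in> A" "tless T (zero D) a"
          using zero_in_A that zero_less_upcl G(2) unfolding hyb_IJ_def by blast+
        then show False using a_min by blast
      qed
    qed
    then show ?thesis using m by blast
  qed
qed

end

theorem mainTheorem7:
  assumes "is_tree T"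
    and "consistent_grafts T \<gamma>"
  shows "is_tree (hybr T \<gamma>)"
proof -
  interpret graft_family T \<gamma> using assms by unfold_locales
  show ?thesis
    using hless_nodes hless_irrefl hless_trans hless_linear_below hless_has_minimal by (rule is_treeI)
qed

end
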